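(* Let $\Pi=((p_1,\dots,p_n),(P_1,\dots,P_n),(d_1,\dots,d_n))$ be an $n$-pod. If $\Pi$ has a collinearity bond, then $p_1,\dots,p_n$ are collinear or $P_1,\dots,P_n$ are collinear (or both). Conversely, if $p_1,\dots,p_n$ are collinear or $P_1,\dots,P_n$ are collinear (or both), then $\Pi$ has a collinearity bond.
   Context: An $n$-pod is a triple of platform points $p_i\in\mathbb{R}^3$, base points $P_i\in\mathbb{R}^3$ and leg lengths $d_i\ge0$. Write a direct isometry as $v\mapsto Mv+y$ ($M\in SO(3)$) and put $x=-M^ty$, $r=\langle y,y\rangle$. It corresponds to $(h:M:x:y:r)=(1:m_{11}:\dots:m_{33}:x_1:x_2:x_3:y_1:y_2:y_3:r)\in\mathbb{P}^{16}_{\mathbb{C}}$. $X$ is the complex Zariski closure of all such points. Throughout, $\langle u,u'\rangle=u^tu'$ is the complex bilinear form on $\mathbb{C}^3$. Let $l_i$ be the linear form $$-d_i^2h+(\langle p_i,p_i\rangle+\langle P_i,P_i\rangle)h+r-2\langle p_i,x\rangle-2\langle y,P_i\rangle-2\langle Mp_i,P_i\rangle.$$ Define: - $K_\Pi=X\cap\{l_1=\dots=l_n=0\}$; - $B=X\cap\{h=0\}$; - the set of bonds $B_\Pi=K_\Pi\cap B$. A collinearity point is a point $(0:M:x:y:r)\in B$ with $M=0$ and exactly one of $x,y$ equal to zero. A collinearity bond is a bond which is a collinearity point. *)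

theory Defs
  imports "HOL-Analysis.Analysis"
begin

text \<open>Points of P^16 are represented by their (affine cone) coordinate vectors
  v :: nat => complex, with coordinates
  0 = h, 1+3j+k = m_(j+1)(k+1) (j,k<3, row-major), 10+k = x_(k+1), 13+k = y_(k+1), 16 = r.
  Coordinates >= 17 are not used (they vanish on X).\<close>

definition comp3 :: "real^3 \<Rightarrow> nat \<Rightarrow> real" where
  "comp3 u k = u $ (of_nat k :: 3)"

definition hC :: "(nat \<Rightarrow> complex) \<Rightarrow> complex" where "hC v = v 0"
definition mC :: "(nat \<Rightarrow> complex) \<Rightarrow> nat \<Rightarrow> nat \<Rightarrow> complex" where "mC v j k = v (1 + 3*j + k)"
definition xC :: "(nat \<Rightarrow> complex) \<Rightarrow> nat \<Rightarrow> complex" where "xC v k = v (10 + k)"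
definition yC :: "(nat \<Rightarrow> complex) \<Rightarrow> nat \<Rightarrow> complex" where "yC v k = v (13 + k)"
definition rC :: "(nat \<Rightarrow> complex) \<Rightarrow> complex" where "rC v = v 16"

text \<open>The point (1:M:x:y:r) attached to the direct isometry v |-> Mv+y.\<close>
definition iso_point :: "real^3^3 \<Rightarrow> real^3 \<Rightarrow> nat \<Rightarrow> complex" where
  "iso_point M y i =
     (if i = 0 then 1
      else if i < 10 then complex_of_real (comp3 (M $ (of_nat ((i - 1) div 3))) ((i - 1) mod 3))
      else if i < 13 then complex_of_real (comp3 (- (transpose M *v y)) (i - 10))
      else if i < 16 then complex_of_real (comp3 y (i - 13))
      else if i = 16 then complex_of_real (y \<bullet> y)
      else 0)"

inductive_set polyfun :: "((nat \<Rightarrow> complex) \<Rightarrow> complex) set" where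
  pf_const: "(\<lambda>v. c) \<in> polyfun"
| pf_var: "(\<lambda>v. v i) \<in> polyfun"
| pf_add: "f \<in> polyfun \<Longrightarrow> g \<in> polyfun \<Longrightarrow> (\<lambda>v. f v + g v) \<in> polyfun"
| pf_mult: "f \<in> polyfun \<Longrightarrow> g \<in> polyfun \<Longrightarrow> (\<lambda>v. f v * g v) \<in> polyfun"

definition zariski_closure :: "(nat \<Rightarrow> complex) set \<Rightarrow> (nat \<Rightarrow> complex) set" where
  "zariski_closure S = {v. \<forall>f\<in>polyfun. (\<forall>w\<in>S. f w = 0) \<longrightarrow> f v = 0}"

definition iso_cone :: "(nat \<Rightarrow> complex) set" where
  "iso_cone = {(\<lambda>i. c * iso_point M y i) | c M y.
                 orthogonal_matrix M \<and> det M = 1}"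

text \<open>Affine cone over X (the Zariski closure in P^16); a point of X is a nonzero element.\<close>
definition Xcone :: "(nat \<Rightarrow> complex) set" where
  "Xcone = zariski_closure iso_cone"

definition lform :: "real^3 \<Rightarrow> real^3 \<Rightarrow> real \<Rightarrow> (nat \<Rightarrow> complex) \<Rightarrow> complex" where
  "lform p P d v =
     complex_of_real (- (d ^ 2) + p \<bullet> p + P \<bullet> P) * hC v + rC v
     - 2 * (\<Sum>k<3. complex_of_real (comp3 p k) * xC v k)
     - 2 * (\<Sum>k<3. yC v k * complex_of_real (comp3 P k))
     - 2 * (\<Sum>j<3. \<Sum>k<3. complex_of_real (comp3 P j) * mC v j k * complex_of_real (comp3 p k))"

definition K_Pi :: "nat \<Rightarrow> (nat \<Rightarrow> real^3) \<Rightarrow> (nat \<Rightarrow> real^3) \<Rightarrow> (nat \<Rightarrow> real) \<Rightarrow> (nat \<Rightarrow> complex) set" where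
  "K_Pi n p P d = {v \<in> Xcone. v \<noteq> (\<lambda>_. 0) \<and> (\<forall>i<n. lform (p i) (P i) (d i) v = 0)}"

definition B_set :: "(nat \<Rightarrow> complex) set" where
  "B_set = {v \<in> Xcone. v \<noteq> (\<lambda>_. 0) \<and> hC v = 0}"

definition bonds :: "nat \<Rightarrow> (nat \<Rightarrow> real^3) \<Rightarrow> (nat \<Rightarrow> real^3) \<Rightarrow> (nat \<Rightarrow> real) \<Rightarrow> (nat \<Rightarrow> complex) set" where
  "bonds n p P d = K_Pi n p P d \<inter> B_set"

definition collinearity_point :: "(nat \<Rightarrow> complex) \<Rightarrow> bool" where
  "collinearity_point v \<longleftrightarrow> v \<in> B_set \<and> hC v = 0 \<and> (\<forall>j<3. \<forall>k<3. mC v j k = 0) \<and>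
     ((\<forall>k<3. xC v k = 0) \<noteq> (\<forall>k<3. yC v k = 0))"

definition has_collinearity_bond :: "nat \<Rightarrow> (nat \<Rightarrow> real^3) \<Rightarrow> (nat \<Rightarrow> real^3) \<Rightarrow> (nat \<Rightarrow> real) \<Rightarrow> bool" where
  "has_collinearity_bond n p P d \<longleftrightarrow> (\<exists>v \<in> bonds n p P d. collinearity_point v)"

end

theory Submission
  imports Defs "HOL-Complex_Analysis.Conformal_Mappings"
begin

text \<open>At a collinearity bond \<open>h = 0\<close> and \<open>M = 0\<close>, and passing to the inverse isometry, which
  exchanges platform and base, one may assume \<open>y = 0 \<noteq> x\<close>. On \<open>X\<close> the relation
  \<open>\<langle>x, x\<rangle> = r h\<close> makes \<open>x\<close> isotropic, and the leg equations reduce to \<open>2 \<langle>p\<^sub>i, x\<rangle> = r\<close>. Hence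
  every \<open>p\<^sub>i - p\<^sub>j\<close> is orthogonal to \<open>Re x\<close> and \<open>Im x\<close>, which span a plane, and the platform
  points lie on a line.

  Conversely, if the platform points lie on a line \<open>a + \<real> u\<close>, the quaternion parametrization
  of the direct isometries, evaluated at the null quaternion \<open>(|u|, i u)\<close>, yields points of \<open>X\<close>
  with \<open>h = M = y = 0\<close> and an isotropic \<open>x \<perp> u\<close>; the translation parameter adjusts \<open>r\<close> to
  \<open>2 \<langle>a, x\<rangle>\<close>. These points lie in \<open>X\<close> because the parametrization is polynomial and real
  parameters are Zariski dense.\<close>

lemma sum_lessThan_3: "(\<Sum>k<3::nat. f k) = f 0 + f (Suc 0) + f 2"
proof -
  have "{..<3::nat} = {0, Suc 0, 2}" by auto
  then show ?thesis by (simp add: ac_simps)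
qed

lemma less_3_cases: "(k::nat) < 3 \<Longrightarrow> k = 0 \<or> k = 1 \<or> k = 2"
  by auto

lemma forall_less_3: "(\<forall>k<3::nat. P k) \<longleftrightarrow> P 0 \<and> P (Suc 0) \<and> P 2"
  by (auto dest: less_3_cases)

lemma vec_nth_0_eq_3 [simp]: "(v::'a^3) $ 0 = v $ 3"
proof -
  have "(0::3) = 3" by (rule sym, simp)
  then show ?thesis by (rule arg_cong)
qed

lemma comp3_simps [simp]: "comp3 u 0 = u $ 3" "comp3 u (Suc 0) = u $ 1" "comp3 u 2 = u $ 2"
  by (simp_all add: comp3_def)

lemma comp3_add: "comp3 (a + b) k = comp3 a k + comp3 b k"
  by (simp add: comp3_def)

lemma comp3_uminus: "comp3 (- a) k = - comp3 a k"
  by (simp add: comp3_def)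

lemma comp3_scaleR: "comp3 (c *\<^sub>R a) k = c * comp3 a k"
  by (simp add: comp3_def)

lemma inner_eq_sum_comp3: "a \<bullet> b = (\<Sum>k<3. comp3 a k * comp3 b k)"
  by (simp add: sum_lessThan_3 inner_vec_def sum_3)

lemma comp3_transpose: "comp3 (transpose M $ of_nat j) k = comp3 (M $ of_nat k) j"
  by (simp add: comp3_def transpose_def)

lemma comp3_transpose_mult:
  "k < 3 \<Longrightarrow> comp3 (transpose M *v y) k = (\<Sum>j<3. comp3 (M $ of_nat j) k * comp3 y j)"
  by (auto dest!: less_3_cases simp: comp3_def sum_lessThan_3 sum_3 vector_matrix_mult_def
      transpose_matrix_vector[symmetric])

lemma exists_comp3_nonzero: "(a::real^3) \<noteq> 0 \<Longrightarrow> \<exists>k<3. comp3 a k \<noteq> 0"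
proof (rule ccontr)
  assume "a \<noteq> 0" "\<not> (\<exists>k<3. comp3 a k \<noteq> 0)"
  then have "\<And>k. k < 3 \<Longrightarrow> comp3 a k = 0" by blast
  from this[of 0] this[of "Suc 0"] this[of 2] have "a = 0" by (simp add: vec_eq_iff forall_3)
  with \<open>a \<noteq> 0\<close> show False ..
qed

text \<open>\<open>vec3\<close> inverts \<open>comp3\<close>; note that \<open>of_nat 0 = 3\<close> in the index type \<open>3\<close>.\<close>

definition vec3 :: "(nat \<Rightarrow> 'a::zero) \<Rightarrow> 'a^3" where
  "vec3 g = vector [g 1, g 2, g 0]"

lemma vec3_nth: "k < 3 \<Longrightarrow> vec3 g $ of_nat k = g k"
  by (auto dest!: less_3_cases simp: vec3_def)

lemma comp3_vec3: "k < 3 \<Longrightarrow> comp3 (vec3 g) k = g k"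
  by (simp add: comp3_def vec3_nth)

section \<open>Polynomial functions and Zariski closure\<close>

lemma polyfun_uminus: "f \<in> polyfun \<Longrightarrow> (\<lambda>v. - f v) \<in> polyfun"
  using pf_mult[OF pf_const[of "-1"]] by simp

lemma polyfun_diff: "f \<in> polyfun \<Longrightarrow> g \<in> polyfun \<Longrightarrow> (\<lambda>v. f v - g v) \<in> polyfun"
  using pf_add[OF _ polyfun_uminus] by simp

lemma polyfun_sum:
  "finite A \<Longrightarrow> (\<And>k. k \<in> A \<Longrightarrow> f k \<in> polyfun) \<Longrightarrow> (\<lambda>v. \<Sum>k\<in>A. f k v) \<in> polyfun"
proof (induction A rule: finite_induct)
  case empty
  then show ?case using pf_const[of 0] by simp
next
  case (insert x F)
  then show ?case by (simp add: pf_add)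
qed

lemma polyfun_if: "f \<in> polyfun \<Longrightarrow> g \<in> polyfun \<Longrightarrow> (\<lambda>v. if b then f v else g v) \<in> polyfun"
  by (cases b) auto

lemmas polyfun_intros = polyfun_if polyfun_uminus polyfun_diff pf_add pf_mult pf_var pf_const

lemma polyfun_compose:
  assumes "f \<in> polyfun" and "\<And>i. (\<lambda>z. \<Phi> z i) \<in> polyfun"
  shows "(\<lambda>z. f (\<Phi> z)) \<in> polyfun"
  using assms(1)
proof induction
  case (pf_var i)
  show ?case using assms(2) .
qed (use pf_add pf_mult in \<open>blast intro: pf_const\<close>)+

lemma polyfun_holomorphic_in_coordinate: "f \<in> polyfun \<Longrightarrow> (\<lambda>t. f (z(m := t))) holomorphic_on UNIV"
proof (induction rule: polyfun.induct)
  case (pf_var i)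
  then show ?case by (cases "i = m") auto
qed (auto intro!: holomorphic_intros)

lemma zariski_closure_vanishing:
  "f \<in> polyfun \<Longrightarrow> (\<And>w. w \<in> S \<Longrightarrow> f w = 0) \<Longrightarrow> v \<in> zariski_closure S \<Longrightarrow> f v = 0"
  unfolding zariski_closure_def by blast

lemma polynomial_map_zariski_closure:
  assumes "\<And>i. (\<lambda>z. \<Phi> z i) \<in> polyfun" and "\<Phi> ` S \<subseteq> T"
  shows "\<Phi> ` zariski_closure S \<subseteq> zariski_closure T"
proof
  fix v
  assume "v \<in> \<Phi> ` zariski_closure S"
  then obtain w where w: "w \<in> zariski_closure S" and v: "v = \<Phi> w" by blast
  show "v \<in> zariski_closure T"
    unfolding zariski_closure_def
  proof (intro CollectI ballI impI)
    fix f
    assume f: "f \<in> polyfun" and van: "\<forall>w\<in>T. f w = 0"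
    have "(\<lambda>z. f (\<Phi> z)) w = 0"
    proof (rule zariski_closure_vanishing[OF polyfun_compose[OF f assms(1)] _ w])
      fix u
      assume "u \<in> S"
      with assms(2) van show "f (\<Phi> u) = 0" by blast
    qed
    then show "f v = 0" by (simp add: v)
  qed
qed

lemma entire_vanishing_on_nonzero_reals:
  assumes "h holomorphic_on UNIV" and "\<And>t. t \<in> \<real> \<Longrightarrow> t \<noteq> 0 \<Longrightarrow> h t = 0"
  shows "h w = 0"
proof (rule analytic_continuation[OF assms(1), of "{t \<in> \<real>. t \<noteq> 0}" 1])
  show "(1::complex) islimpt {t \<in> \<real>. t \<noteq> 0}"
  proof (rule islimpt_approachable[THEN iffD2], intro allI impI)
    fix e :: real
    assume e: "0 < e"
    define t where "t = complex_of_real (1 + e/2)"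
    have "t - 1 = complex_of_real (e/2)" by (simp add: t_def)
    then have "dist t 1 = norm (complex_of_real (e/2))" by (simp only: dist_norm)
    then have "dist t 1 < e" using e by simp
    moreover have "t \<in> \<real>" "t \<noteq> 0" "t \<noteq> 1" using e by (auto simp: t_def complex_eq_iff)
    ultimately show "\<exists>t'::complex\<in>{t \<in> \<real>. t \<noteq> 0}. t' \<noteq> 1 \<and> dist t' 1 < e" by blast
  qed
qed (use assms in auto)

text \<open>Real points are Zariski dense: freeing the coordinates one at a time, each polynomial
  restricted to a complex line is entire and vanishes on the nonzero reals.\<close>

lemma polyfun_vanishing_on_reals:
  assumes f: "f \<in> polyfun" and van: "\<And>z. \<forall>i<K. z i \<in> \<real> \<Longrightarrow> z 0 \<noteq> 0 \<Longrightarrow> f z = 0"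
  shows "\<forall>z. (\<forall>i. m \<le> i \<and> i < K \<longrightarrow> z i \<in> \<real>) \<longrightarrow> f z = 0"
proof (induction m)
  case 0
  show ?case
  proof (intro allI impI)
    fix z :: "nat \<Rightarrow> complex"
    assume z: "\<forall>i. 0 \<le> i \<and> i < K \<longrightarrow> z i \<in> \<real>"
    have "(\<lambda>t. f (z(0 := t))) (z 0) = 0"
    proof (rule entire_vanishing_on_nonzero_reals[OF polyfun_holomorphic_in_coordinate[OF f]])
      fix t :: complex
      assume "t \<in> \<real>" "t \<noteq> 0"
      with z show "f (z(0 := t)) = 0" by (intro van) auto
    qed
    then show "f z = 0" by simp
  qed
next
  case (Suc m)
  show ?case
  proof (intro allI impI)
    fix z :: "nat \<Rightarrow> complex"
    assume z: "\<forall>i. Suc m \<le> i \<and> i < K \<longrightarrow> z i \<in> \<real>"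
    have "(\<lambda>t. f (z(m := t))) (z m) = 0"
    proof (rule entire_vanishing_on_nonzero_reals[OF polyfun_holomorphic_in_coordinate[OF f]])
      fix t :: complex
      assume "t \<in> \<real>" "t \<noteq> 0"
      have "m \<le> i \<and> i < K \<longrightarrow> (z(m := t)) i \<in> \<real>" for i
        using z \<open>t \<in> \<real>\<close> by (cases "i = m") (auto simp: Suc_le_eq)
      with Suc.IH show "f (z(m := t)) = 0" by blast
    qed
    then show "f z = 0" by simp
  qed
qed

lemma zariski_closure_real_points: "zariski_closure {z. (\<forall>i<K. z i \<in> \<real>) \<and> z 0 \<noteq> 0} = UNIV"
proof -
  have "f z = 0" if f: "f \<in> polyfun" and van: "\<forall>w\<in>{z. (\<forall>i<K. z i \<in> \<real>) \<and> z 0 \<noteq> 0}. f w = 0"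
    for f z
    using polyfun_vanishing_on_reals[OF f, of K K] van by auto
  then show ?thesis unfolding zariski_closure_def by blast
qed

definition block_point ::
    "complex \<Rightarrow> (nat \<Rightarrow> nat \<Rightarrow> complex) \<Rightarrow> (nat \<Rightarrow> complex) \<Rightarrow> (nat \<Rightarrow> complex) \<Rightarrow> complex
      \<Rightarrow> nat \<Rightarrow> complex" where
  "block_point h m x y r i =
     (if i = 0 then h
      else if i < 10 then m ((i - 1) div 3) ((i - 1) mod 3)
      else if i < 13 then x (i - 10)
      else if i < 16 then y (i - 13)
      else if i = 16 then r
      else 0)"

lemma block_point_coords:
  "hC (block_point h m x y r) = h"
  "j < 3 \<Longrightarrow> k < 3 \<Longrightarrow> mC (block_point h m x y r) j k = m j k"
  "k < 3 \<Longrightarrow> xC (block_point h m x y r) k = x k"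
  "k < 3 \<Longrightarrow> yC (block_point h m x y r) k = y k"
  "rC (block_point h m x y r) = r"
  by (auto simp: block_point_def hC_def mC_def xC_def yC_def rC_def)

lemma block_point_cong:
  assumes "h = h'" "\<And>j k. j < 3 \<Longrightarrow> k < 3 \<Longrightarrow> m j k = m' j k"
    "\<And>k. k < 3 \<Longrightarrow> x k = x' k" "\<And>k. k < 3 \<Longrightarrow> y k = y' k" "r = r'"
  shows "block_point h m x y r = block_point h' m' x' y' r'"
proof
  fix i :: nat
  have "(i - 1) div 3 < 3" "(i - 1) mod 3 < 3" if "i < 10" using that by auto
  then show "block_point h m x y r i = block_point h' m' x' y' r' i"
    using assms by (simp add: block_point_def)
qed

lemma scaled_block_point:
  "(\<lambda>i. c * block_point h m x y r i) =
     block_point (c * h) (\<lambda>j k. c * m j k) (\<lambda>k. c * x k) (\<lambda>k. c * y k) (c * r)"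
  by (auto simp: block_point_def)

lemma polyfun_block_point:
  assumes "h \<in> polyfun" "\<And>j k. (\<lambda>z. m z j k) \<in> polyfun" "\<And>k. (\<lambda>z. x z k) \<in> polyfun"
    "\<And>k. (\<lambda>z. y z k) \<in> polyfun" "r \<in> polyfun"
  shows "(\<lambda>z. block_point (h z) (m z) (x z) (y z) (r z) i) \<in> polyfun"
  unfolding block_point_def using assms by (intro polyfun_intros) simp_all

lemma iso_point_block_point:
  "iso_point M y =
     block_point 1 (\<lambda>j k. complex_of_real (comp3 (M $ of_nat j) k))
       (\<lambda>k. complex_of_real (comp3 (- (transpose M *v y)) k)) (\<lambda>k. complex_of_real (comp3 y k))
       (complex_of_real (y \<bullet> y))"
  by (auto simp: iso_point_def block_point_def)

section \<open>The inverse isometry\<close>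

lemma matrix_vector_mult_uminus_right: "(A::real^'n^'m) *v (- x) = - (A *v x)"
  by (simp add: matrix_vector_mult_def vec_eq_iff sum_negf)

lemma inner_transpose_orthogonal:
  "orthogonal_matrix M \<Longrightarrow> (transpose M *v y) \<bullet> (transpose M *v y) = y \<bullet> (y::real^'n)"
  by (metis dot_lmul_matrix orthogonal_matrix_def transpose_matrix_vector
      vector_matrix_mul_assoc vector_matrix_mul_rid)

text \<open>The inverse of \<open>v \<mapsto> M v + y\<close> is \<open>v \<mapsto> M\<^sup>t v + x\<close>: it transposes \<open>M\<close> and swaps
  \<open>x\<close> with \<open>y\<close>, and thereby exchanges the roles of platform and base.\<close>

definition swap_point :: "(nat \<Rightarrow> complex) \<Rightarrow> nat \<Rightarrow> complex" where
  "swap_point v = block_point (hC v) (\<lambda>j k. mC v k j) (yC v) (xC v) (rC v)"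

lemma swap_point_coords:
  "hC (swap_point v) = hC v"
  "j < 3 \<Longrightarrow> k < 3 \<Longrightarrow> mC (swap_point v) j k = mC v k j"
  "k < 3 \<Longrightarrow> xC (swap_point v) k = yC v k"
  "k < 3 \<Longrightarrow> yC (swap_point v) k = xC v k"
  "rC (swap_point v) = rC v"
  by (simp_all add: swap_point_def block_point_coords)

lemma swap_point_iso_point:
  assumes "orthogonal_matrix M"
  shows "swap_point (iso_point M y) = iso_point (transpose M) (- (transpose M *v y))"
proof -
  have "M *v (transpose M *v y) = y"
    using assms unfolding orthogonal_matrix_def by (metis matrix_vector_mul_assoc matrix_vector_mul_lid)
  then have "- (M *v - (transpose M *v y)) = y"
    by (simp only: matrix_vector_mult_uminus_right minus_minus)
  moreover have "(transpose M *v y) \<bullet> (transpose M *v y) = y \<bullet> y"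
    using assms by (rule inner_transpose_orthogonal)
  ultimately show ?thesis
    unfolding swap_point_def iso_point_block_point
    by (intro block_point_cong) (simp_all add: block_point_coords comp3_transpose)
qed

lemma swap_point_scaled: "swap_point (\<lambda>i. c * v i) = (\<lambda>i. c * swap_point v i)"
  by (simp add: swap_point_def scaled_block_point hC_def mC_def xC_def[abs_def] yC_def[abs_def] rC_def)

lemma swap_point_Xcone:
  assumes "v \<in> Xcone"
  shows "swap_point v \<in> Xcone"
proof -
  have "(\<lambda>v. swap_point v i) \<in> polyfun" for i
    unfolding swap_point_def hC_def mC_def xC_def yC_def rC_def
    by (rule polyfun_block_point) (rule pf_var)+
  moreover have "swap_point ` iso_cone \<subseteq> iso_cone"
  proof
    fix w
    assume "w \<in> swap_point ` iso_cone"
    then obtain c M y where "w = swap_point (\<lambda>i. c * iso_point M y i)"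
      and M: "orthogonal_matrix M" "det M = 1"
      unfolding iso_cone_def by blast
    then have "w = (\<lambda>i. c * iso_point (transpose M) (- (transpose M *v y)) i)"
      by (simp add: swap_point_scaled swap_point_iso_point)
    with M show "w \<in> iso_cone" unfolding iso_cone_def by fastforce
  qed
  ultimately have "swap_point ` Xcone \<subseteq> Xcone"
    unfolding Xcone_def by (rule polynomial_map_zariski_closure)
  with assms show ?thesis by blast
qed

lemma lform_swap_point: "lform p P d (swap_point v) = lform P p d v"
proof -
  have "(\<Sum>j<3. \<Sum>k<3. complex_of_real (comp3 P j) * mC v k j * complex_of_real (comp3 p k)) =
        (\<Sum>j<3. \<Sum>k<3. complex_of_real (comp3 p j) * mC v j k * complex_of_real (comp3 P k))"
    by (subst sum.swap) (simp add: ac_simps)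
  then show ?thesis
    unfolding lform_def swap_point_def
    by (simp add: block_point_coords ac_simps)
qed

lemma collinearity_point_iff:
  "collinearity_point v \<longleftrightarrow> v \<in> Xcone \<and> hC v = 0 \<and> (\<forall>j<3. \<forall>k<3. mC v j k = 0) \<and>
     ((\<forall>k<3. xC v k = 0) \<noteq> (\<forall>k<3. yC v k = 0))"
proof -
  have "v \<noteq> (\<lambda>_. 0)" if "(\<forall>k<3. xC v k = 0) \<noteq> (\<forall>k<3. yC v k = 0)"
    using that unfolding xC_def yC_def by auto
  then show ?thesis unfolding collinearity_point_def B_set_def by auto
qed

lemma has_collinearity_bond_iff:
  "has_collinearity_bond n p P d \<longleftrightarrow>
     (\<exists>v. collinearity_point v \<and> (\<forall>i<n. lform (p i) (P i) (d i) v = 0))"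
  unfolding has_collinearity_bond_def bonds_def K_Pi_def collinearity_point_def B_set_def by blast

lemma collinearity_point_swap_point: "collinearity_point v \<Longrightarrow> collinearity_point (swap_point v)"
  using swap_point_Xcone[of v] by (auto simp: collinearity_point_iff swap_point_coords)

lemma has_collinearity_bond_swap:
  assumes "has_collinearity_bond n p P d"
  shows "has_collinearity_bond n P p d"
proof -
  from assms obtain v where "collinearity_point v" "\<forall>i<n. lform (p i) (P i) (d i) v = 0"
    unfolding has_collinearity_bond_iff by blast
  then show ?thesis unfolding has_collinearity_bond_iff
    by (intro exI[of _ "swap_point v"]) (simp add: collinearity_point_swap_point lform_swap_point)
qed

section \<open>Bonds with vanishing \<open>y\<close> block force a collinear platform\<close>

lemma Xcone_x_isotropic:
  assumes "v \<in> Xcone"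
  shows "(\<Sum>k<3. xC v k * xC v k) = rC v * hC v"
proof -
  let ?q = "\<lambda>v. (\<Sum>k<3. xC v k * xC v k) - rC v * hC v"
  have "?q \<in> polyfun"
    unfolding xC_def rC_def hC_def by (intro polyfun_diff polyfun_sum pf_mult pf_var) auto
  moreover have "?q w = 0" if "w \<in> iso_cone" for w
  proof -
    from that obtain c M y where w: "w = (\<lambda>i. c * iso_point M y i)" and M: "orthogonal_matrix M"
      unfolding iso_cone_def by blast
    have "(\<Sum>k<3. comp3 (- (transpose M *v y)) k * comp3 (- (transpose M *v y)) k) = y \<bullet> y"
      using inner_transpose_orthogonal[OF M, of y] by (simp add: inner_eq_sum_comp3 comp3_uminus)
    then have "(\<Sum>k<3. complex_of_real (comp3 (- (transpose M *v y)) k) *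
                       complex_of_real (comp3 (- (transpose M *v y)) k)) = complex_of_real (y \<bullet> y)"
      by (simp flip: of_real_mult of_real_sum)
    then show ?thesis
      by (simp add: w scaled_block_point iso_point_block_point block_point_coords
          algebra_simps flip: sum_distrib_left)
  qed
  ultimately have "?q v = 0"
    using assms unfolding Xcone_def by (rule zariski_closure_vanishing)
  then show ?thesis by simp
qed



definition cinner :: "real^3 \<Rightarrow> (nat \<Rightarrow> complex) \<Rightarrow> complex" where
  "cinner u w = (\<Sum>k<3. complex_of_real (comp3 u k) * w k)"

definition re3 :: "(nat \<Rightarrow> complex) \<Rightarrow> real^3" where
  "re3 w = vec3 (\<lambda>k. Re (w k))"

definition im3 :: "(nat \<Rightarrow> complex) \<Rightarrow> real^3" where
  "im3 w = vec3 (\<lambda>k. Im (w k))"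

lemma cinner_add_scaleR: "cinner (a + c *\<^sub>R u) w = cinner a w + complex_of_real c * cinner u w"
  by (simp add: cinner_def comp3_add comp3_scaleR sum_lessThan_3 algebra_simps)

lemma cinner_diff: "cinner (a - b) w = cinner a w - cinner b w"
  by (simp add: cinner_def comp3_def sum_subtractf algebra_simps)

lemma cinner_Re_Im: "cinner u w = Complex (u \<bullet> re3 w) (u \<bullet> im3 w)"
  by (simp add: cinner_def re3_def im3_def inner_eq_sum_comp3 comp3_vec3 sum_lessThan_3
      complex_eq_iff)

lemma sum_squares_Re_Im:
  "(\<Sum>k<3. w k * w k) = Complex (re3 w \<bullet> re3 w - im3 w \<bullet> im3 w) (2 * (re3 w \<bullet> im3 w))"
  by (simp add: re3_def im3_def inner_eq_sum_comp3 comp3_vec3 sum_lessThan_3 complex_eq_iff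
      algebra_simps)

lemma re3_im3_eq_0: "re3 w = 0 \<Longrightarrow> im3 w = 0 \<Longrightarrow> k < 3 \<Longrightarrow> w k = 0"
proof -
  assume "re3 w = 0" "im3 w = 0" "k < 3"
  then have "Re (w k) = comp3 0 k" "Im (w k) = comp3 0 k"
    by (metis re3_def im3_def comp3_vec3)+
  then show "w k = 0" by (simp add: comp3_def complex_eq_iff)
qed

lemma lform_collinearity_point:
  assumes "hC v = 0" "\<forall>j<3. \<forall>k<3. mC v j k = 0" "\<forall>k<3. yC v k = 0"
  shows "lform p P d v = rC v - 2 * cinner p (xC v)"
proof -
  have "(\<Sum>k<3. yC v k * complex_of_real (comp3 P k)) = 0"
    "(\<Sum>j<3. \<Sum>k<3. complex_of_real (comp3 P j) * mC v j k * complex_of_real (comp3 p k)) = 0"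
    using assms(2,3) by (auto intro: sum.neutral)
  with assms(1) show ?thesis unfolding lform_def cinner_def by simp
qed

lemma cross3_cross3: "cross3 w (cross3 a b) = (w \<bullet> b) *\<^sub>R a - (w \<bullet> a) *\<^sub>R b"
  by (simp add: cross3_def vec_eq_iff forall_3 inner_vec_def sum_3 vector_3 algebra_simps)

text \<open>The real and imaginary parts of a nonzero isotropic vector \<open>a + i b\<close> are orthogonal and of
  equal nonzero length, so the vectors orthogonal to both form the line spanned by \<open>a \<times> b\<close>.\<close>

lemma collinear_orthogonal_to_isotropic:
  fixes a b :: "real^3"
  assumes "a \<bullet> a = b \<bullet> b" and "a \<bullet> b = 0" and "a \<noteq> 0 \<or> b \<noteq> 0"
    and orth: "\<And>x y. x \<in> S \<Longrightarrow> y \<in> S \<Longrightarrow> (x - y) \<bullet> a = 0 \<and> (x - y) \<bullet> b = 0"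
  shows "collinear S"
proof -
  have "a \<noteq> 0" "b \<noteq> 0" using assms(1-3) by auto
  then have "(norm (cross3 a b))\<^sup>2 \<noteq> 0"
    using norm_cross_dot[of a b] assms(2) by simp
  then have ab: "cross3 a b \<noteq> 0" by auto
  show ?thesis unfolding collinear_def
  proof (rule exI[of _ "cross3 a b"], intro ballI)
    fix x y
    assume "x \<in> S" "y \<in> S"
    then have "cross3 (x - y) (cross3 a b) = 0" using orth by (simp add: cross3_cross3)
    then have "collinear {0, cross3 a b, x - y}" by (metis cross_eq_0 insert_commute)
    with ab show "\<exists>c. x - y = c *\<^sub>R cross3 a b" by (metis collinear_lemma scale_zero_left)
  qed
qed

lemma collinear_platform_if_bond:
  assumes "collinearity_point v" and "\<forall>k<3. yC v k = 0"
    and l: "\<forall>i<n. lform (p i) (P i) (d i) v = 0"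
  shows "collinear (p ` {..<n})"
proof -
  from assms(1,2) have X: "v \<in> Xcone" and h: "hC v = 0" and m: "\<forall>j<3. \<forall>k<3. mC v j k = 0"
    and x: "\<not> (\<forall>k<3. xC v k = 0)"
    unfolding collinearity_point_iff by auto
  let ?a = "re3 (xC v)" and ?b = "im3 (xC v)"
  have "Complex (?a \<bullet> ?a - ?b \<bullet> ?b) (2 * (?a \<bullet> ?b)) = 0"
    using Xcone_x_isotropic[OF X] h by (simp flip: sum_squares_Re_Im)
  then have ab: "?a \<bullet> ?a = ?b \<bullet> ?b" "?a \<bullet> ?b = 0" by (simp_all add: complex_eq_iff)
  have nz: "?a \<noteq> 0 \<or> ?b \<noteq> 0" using x re3_im3_eq_0 by blast
  have c: "cinner x (xC v) = rC v / 2" if "x \<in> p ` {..<n}" for x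
    using l that lform_collinearity_point[OF h m assms(2)] by auto
  have "cinner (x - y) (xC v) = 0" if "x \<in> p ` {..<n}" "y \<in> p ` {..<n}" for x y
    unfolding cinner_diff c[OF that(1)] c[OF that(2)] by simp
  then show ?thesis
    using collinear_orthogonal_to_isotropic[OF ab nz] by (simp add: cinner_Re_Im complex_eq_iff)
qed

section \<open>A polynomial parametrization by quaternions\<close>

text \<open>For a real quaternion \<open>q\<close> with \<open>s = |q|\<^sup>2 \<noteq> 0\<close>, the matrix \<open>quat_rot q / s\<close> is the rotation
  of the Euler--Rodrigues formula.\<close>

definition quat_norm2 :: "(nat \<Rightarrow> 'a::comm_ring_1) \<Rightarrow> 'a" where
  "quat_norm2 q = q 0 * q 0 + q 1 * q 1 + q 2 * q 2 + q 3 * q 3"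

definition quat_rot :: "(nat \<Rightarrow> 'a::comm_ring_1) \<Rightarrow> nat \<Rightarrow> nat \<Rightarrow> 'a" where
  "quat_rot q j k =
    (if j = 0 then
       (if k = 0 then q 0 * q 0 + q 1 * q 1 - q 2 * q 2 - q 3 * q 3
        else if k = 1 then 2 * (q 1 * q 2 - q 0 * q 3)
        else 2 * (q 1 * q 3 + q 0 * q 2))
     else if j = 1 then
       (if k = 0 then 2 * (q 1 * q 2 + q 0 * q 3)
        else if k = 1 then q 0 * q 0 - q 1 * q 1 + q 2 * q 2 - q 3 * q 3
        else 2 * (q 2 * q 3 - q 0 * q 1))
     else
       (if k = 0 then 2 * (q 1 * q 3 - q 0 * q 2)
        else if k = 1 then 2 * (q 2 * q 3 + q 0 * q 1)
        else q 0 * q 0 - q 1 * q 1 - q 2 * q 2 + q 3 * q 3))"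

definition mat3 :: "(nat \<Rightarrow> nat \<Rightarrow> real) \<Rightarrow> real^3^3" where
  "mat3 f = vec3 (\<lambda>j. vec3 (f j))"

lemma comp3_mat3: "j < 3 \<Longrightarrow> k < 3 \<Longrightarrow> comp3 (mat3 f $ of_nat j) k = f j k"
  by (simp add: mat3_def vec3_nth comp3_vec3)

lemma quat_rot_orthogonal:
  fixes q :: "nat \<Rightarrow> real"
  assumes "quat_norm2 q \<noteq> 0"
  shows "orthogonal_matrix (mat3 (\<lambda>j k. quat_rot q j k / quat_norm2 q))"
  unfolding orthogonal_matrix_def mat3_def vec3_def
  apply (simp add: matrix_matrix_mult_def transpose_def mat_def vec_eq_iff forall_3 sum_3 vector_3
      quat_rot_def)
  using assms
  apply (simp add: field_simps)
  apply (simp add: quat_norm2_def)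
  apply algebra
  done

lemma quat_rot_det:
  fixes q :: "nat \<Rightarrow> real"
  assumes "quat_norm2 q \<noteq> 0"
  shows "det (mat3 (\<lambda>j k. quat_rot q j k / quat_norm2 q)) = 1"
  unfolding mat3_def vec3_def det_3
  using assms
  apply (simp add: vector_3 quat_rot_def field_simps)
  apply (simp add: quat_norm2_def)
  apply algebra
  done

text \<open>Coordinates \<open>0..3\<close> of \<open>z\<close> form a quaternion \<open>q\<close> and \<open>4..6\<close> a translation \<open>t\<close>. For real \<open>z\<close>,
  \<open>quat_point z\<close> is \<open>s\<^sup>2\<close> times the point of the isometry with rotation \<open>quat_rot q / s\<close> and
  translation \<open>t / s\<close>, where \<open>s = |q|\<^sup>2\<close>; the scaling clears all denominators.\<close>

definition quat_point :: "(nat \<Rightarrow> complex) \<Rightarrow> nat \<Rightarrow> complex" where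
  "quat_point z =
     block_point (quat_norm2 z * quat_norm2 z) (\<lambda>j k. quat_norm2 z * quat_rot z j k)
       (\<lambda>k. - (\<Sum>j<3. quat_rot z j k * z (4 + j))) (\<lambda>k. quat_norm2 z * z (4 + k))
       (\<Sum>k<3. z (4 + k) * z (4 + k))"

lemma quat_point_cong:
  assumes "\<And>i. i < 7 \<Longrightarrow> z i = z' i"
  shows "quat_point z = quat_point z'"
proof -
  have "quat_norm2 z = quat_norm2 z'" "quat_rot z = quat_rot z'"
    using assms[of 0] assms[of 1] assms[of 2] assms[of 3]
    by (simp_all add: quat_norm2_def quat_rot_def fun_eq_iff)
  moreover have "z (4 + k) = z' (4 + k)" if "k < 3" for k
    using that assms by simp
  ultimately show ?thesis unfolding quat_point_def by (auto intro!: block_point_cong)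
qed

lemma quat_point_of_real:
  fixes r :: "nat \<Rightarrow> real"
  defines "s \<equiv> quat_norm2 r"
  assumes "s \<noteq> 0"
  shows "quat_point (\<lambda>i. complex_of_real (r i)) =
     (\<lambda>i. complex_of_real (s * s) *
        iso_point (mat3 (\<lambda>j k. quat_rot r j k / s)) (vec3 (\<lambda>k. r (4 + k) / s)) i)"
    (is "_ = (\<lambda>i. _ * iso_point ?M ?y i)")
proof -
  have x: "s * s * comp3 (- (transpose ?M *v ?y)) k = - (\<Sum>j<3. quat_rot r j k * r (4 + j))"
    if "k < 3" for k
  proof -
    have "comp3 (- (transpose ?M *v ?y)) k = - (\<Sum>j<3. quat_rot r j k / s * (r (4 + j) / s))"
      using that unfolding comp3_uminus comp3_transpose_mult[OF that]
      by (simp add: comp3_mat3 comp3_vec3)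
    then show ?thesis
      using assms(2) by (simp add: sum_lessThan_3 field_simps)
  qed
  have r: "s * s * (?y \<bullet> ?y) = (\<Sum>k<3. r (4 + k) * r (4 + k))"
    using assms(2) by (simp add: inner_eq_sum_comp3 comp3_vec3 sum_lessThan_3 field_simps)
  have "quat_norm2 (\<lambda>i. complex_of_real (r i)) = complex_of_real s"
    "quat_rot (\<lambda>i. complex_of_real (r i)) = (\<lambda>j k. complex_of_real (quat_rot r j k))"
    by (simp_all add: s_def quat_norm2_def quat_rot_def fun_eq_iff)
  then show ?thesis
    unfolding quat_point_def scaled_block_point iso_point_block_point
  proof (intro block_point_cong)
    fix k :: nat
    assume k: "k < 3"
    from arg_cong[OF x[OF k], of complex_of_real]
    show "- (\<Sum>j<3. quat_rot (\<lambda>i. complex_of_real (r i)) j k * complex_of_real (r (4 + j))) =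
      complex_of_real (s * s) * complex_of_real (comp3 (- (transpose ?M *v ?y)) k)"
      unfolding \<open>quat_rot _ = _\<close> by simp
  next
    from arg_cong[OF r, of complex_of_real]
    show "(\<Sum>k<3. complex_of_real (r (4 + k)) * complex_of_real (r (4 + k))) =
      complex_of_real (s * s) * complex_of_real (?y \<bullet> ?y)" by simp
  qed (use assms(2) in \<open>simp_all add: comp3_mat3 comp3_vec3\<close>)
qed

lemma quat_point_real:
  assumes "\<forall>i<7. z i \<in> \<real>" and "z 0 \<noteq> 0"
  shows "quat_point z \<in> iso_cone"
proof -
  define r where "r i = Re (z i)" for i
  have z: "quat_point z = quat_point (\<lambda>i. complex_of_real (r i))"
    using assms(1) by (intro quat_point_cong) (simp add: r_def of_real_Re)
  have "r 0 \<noteq> 0"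
    using assms(1)[rule_format, of 0] assms(2) by (simp add: r_def complex_eq_iff complex_is_Real_iff)
  then have "r 0 * r 0 > 0" by (simp add: zero_less_mult_iff linorder_neq_iff disj_commute)
  moreover have "r 1 * r 1 + r 2 * r 2 + r 3 * r 3 \<ge> 0" by simp
  ultimately have "quat_norm2 r \<noteq> 0"
    unfolding quat_norm2_def by linarith
  then show ?thesis
    unfolding z quat_point_of_real[OF \<open>quat_norm2 r \<noteq> 0\<close>] iso_cone_def
    using quat_rot_orthogonal quat_rot_det by blast
qed

lemma quat_point_Xcone: "quat_point z \<in> Xcone"
proof -
  have "(\<lambda>z. quat_point z i) \<in> polyfun" for i
    unfolding quat_point_def quat_norm2_def quat_rot_def sum_lessThan_3
    by (intro polyfun_block_point polyfun_intros)
  moreover have "quat_point ` {z. (\<forall>i<7. z i \<in> \<real>) \<and> z 0 \<noteq> 0} \<subseteq> iso_cone"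
    using quat_point_real by blast
  ultimately have "quat_point ` zariski_closure {z. (\<forall>i<7. z i \<in> \<real>) \<and> z 0 \<noteq> 0} \<subseteq> Xcone"
    unfolding Xcone_def by (rule polynomial_map_zariski_closure)
  then show ?thesis unfolding zariski_closure_real_points by blast
qed

lemma quat_point_null:
  assumes "quat_norm2 z = 0"
  shows "quat_point z =
    block_point 0 (\<lambda>_ _. 0) (\<lambda>k. - (\<Sum>j<3. quat_rot z j k * z (4 + j))) (\<lambda>_. 0)
      (\<Sum>k<3. z (4 + k) * z (4 + k))"
  using assms by (simp add: quat_point_def)

section \<open>Collinear platforms have collinearity bonds\<close>

text \<open>For \<open>w\<^sup>2 = |u|\<^sup>2\<close> the complex quaternion \<open>(w, i u)\<close> is null, and its rotation matrix
  annihilates \<open>u\<close> from both sides.\<close>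

definition null_quat :: "real \<Rightarrow> real^3 \<Rightarrow> nat \<Rightarrow> complex" where
  "null_quat w u i = (if i = 0 then complex_of_real w else \<i> * complex_of_real (comp3 u (i - 1)))"

lemma inner_self_3: "(u::real^3) \<bullet> u = u $ 1 * u $ 1 + u $ 2 * u $ 2 + u $ 3 * u $ 3"
  by (simp add: inner_vec_def sum_3)

lemma quat_norm2_null_quat: "w * w = u \<bullet> u \<Longrightarrow> quat_norm2 (null_quat w u) = 0"
  by (simp add: inner_self_3 quat_norm2_def null_quat_def complex_eq_iff)

lemma quat_rot_null_quat_left:
  assumes "w * w = u \<bullet> u" "k < 3"
  shows "(\<Sum>j<3. quat_rot (null_quat w u) j k * complex_of_real (comp3 u j)) = 0"
proof -
  have w: "w * w = u $ 1 * u $ 1 + u $ 2 * u $ 2 + u $ 3 * u $ 3" using assms(1) by (simp add: inner_self_3)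
  then have w': "w * (w * x) = (u $ 1 * u $ 1 + u $ 2 * u $ 2 + u $ 3 * u $ 3) * x" for x
    by (simp flip: mult.assoc)
  have "\<forall>k<3. (\<Sum>j<3. quat_rot (null_quat w u) j k * complex_of_real (comp3 u j)) = 0"
    unfolding forall_less_3
    by (simp add: sum_lessThan_3 quat_rot_def null_quat_def complex_eq_iff algebra_simps w')
  with assms(2) show ?thesis by blast
qed

lemma quat_rot_null_quat_right:
  assumes "w * w = u \<bullet> u" "j < 3"
  shows "(\<Sum>k<3. quat_rot (null_quat w u) j k * complex_of_real (comp3 u k)) = 0"
proof -
  have w: "w * w = u $ 1 * u $ 1 + u $ 2 * u $ 2 + u $ 3 * u $ 3" using assms(1) by (simp add: inner_self_3)
  then have w': "w * (w * x) = (u $ 1 * u $ 1 + u $ 2 * u $ 2 + u $ 3 * u $ 3) * x" for x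
    by (simp flip: mult.assoc)
  have "\<forall>j<3. (\<Sum>k<3. quat_rot (null_quat w u) j k * complex_of_real (comp3 u k)) = 0"
    unfolding forall_less_3
    by (simp add: sum_lessThan_3 quat_rot_def null_quat_def complex_eq_iff algebra_simps w')
  with assms(2) show ?thesis by blast
qed

lemma Re_quat_rot_null_quat:
  assumes "w * w = u \<bullet> u" "j < 3" "k < 3"
  shows "Re (quat_rot (null_quat w u) j k) = 2 * ((if j = k then u \<bullet> u else 0) - comp3 u j * comp3 u k)"
proof -
  have w: "w * w = u $ 1 * u $ 1 + u $ 2 * u $ 2 + u $ 3 * u $ 3" using assms(1) by (simp add: inner_self_3)
  have "\<forall>j<3. \<forall>k<3.
      Re (quat_rot (null_quat w u) j k) = 2 * ((if j = k then u \<bullet> u else 0) - comp3 u j * comp3 u k)"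
    unfolding forall_less_3 by (simp add: quat_rot_def null_quat_def inner_self_3 w)
  with assms(2,3) show ?thesis by blast
qed
definition null_quat_x :: "real \<Rightarrow> real^3 \<Rightarrow> real^3 \<Rightarrow> nat \<Rightarrow> complex" where
  "null_quat_x w u b k = - (\<Sum>j<3. quat_rot (null_quat w u) j k * complex_of_real (comp3 b j))"

lemma null_quat_x_nonzero:
  assumes "w * w = u \<bullet> u" and "u \<noteq> 0" and "b \<noteq> 0" and "u \<bullet> b = 0"
  shows "\<exists>k<3. null_quat_x w u b k \<noteq> 0"
proof -
  have "\<forall>k<3. Re (null_quat_x w u b k) = - 2 * (u \<bullet> u) * comp3 b k + 2 * comp3 u k * (u \<bullet> b)"
    unfolding forall_less_3 null_quat_x_def inner_eq_sum_comp3[of u b]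
    by (simp add: sum_lessThan_3 Re_quat_rot_null_quat[OF assms(1)] algebra_simps)
  moreover obtain k where "k < 3" "comp3 b k \<noteq> 0"
    using exists_comp3_nonzero[OF assms(3)] by blast
  ultimately have "Re (null_quat_x w u b k) \<noteq> 0"
    using assms(2,4) by simp
  with \<open>k < 3\<close> show ?thesis by force
qed

lemma cinner_null_quat_x: "w * w = u \<bullet> u \<Longrightarrow> cinner u (null_quat_x w u b) = 0"
proof -
  assume uu: "w * w = u \<bullet> u"
  have "cinner u (null_quat_x w u b) = - (\<Sum>j<3. complex_of_real (comp3 b j) *
      (\<Sum>k<3. quat_rot (null_quat w u) j k * complex_of_real (comp3 u k)))"
    by (simp add: cinner_def null_quat_x_def sum_lessThan_3 algebra_simps)
  then show ?thesis
    using quat_rot_null_quat_right[OF uu] by simp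
qed

text \<open>At the null quaternion the translation \<open>b + \<mu> u\<close>, \<open>b \<perp> u\<close>, gives a point whose \<open>x\<close> block
  does not depend on \<open>\<mu>\<close>, while \<open>r = |b|\<^sup>2 + \<mu>\<^sup>2 |u|\<^sup>2\<close> can be given any value.\<close>

lemma quat_point_null_quat:
  assumes "w * w = u \<bullet> u" and "u \<bullet> b = 0"
  shows "quat_point (\<lambda>i. if i < 4 then null_quat w u i
                        else complex_of_real (comp3 b (i - 4)) + \<mu> * complex_of_real (comp3 u (i - 4))) =
    block_point 0 (\<lambda>_ _. 0) (null_quat_x w u b) (\<lambda>_. 0)
      (complex_of_real (b \<bullet> b) + \<mu> * \<mu> * complex_of_real (u \<bullet> u))"
    (is "quat_point ?z = _")
proof -
  define t where "t k = complex_of_real (comp3 b k) + \<mu> * complex_of_real (comp3 u k)" for k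
  have "quat_norm2 ?z = 0"
    using quat_norm2_null_quat[OF assms(1)] by (simp add: quat_norm2_def)
  moreover have "quat_rot ?z = quat_rot (null_quat w u)"
    by (simp add: quat_rot_def fun_eq_iff)
  ultimately have z: "quat_point ?z = block_point 0 (\<lambda>_ _. 0)
      (\<lambda>k. - (\<Sum>j<3. quat_rot (null_quat w u) j k * t j)) (\<lambda>_. 0) (\<Sum>k<3. t k * t k)"
    by (simp add: quat_point_null t_def)
  have "- (\<Sum>j<3. quat_rot (null_quat w u) j k * t j) = null_quat_x w u b k" if "k < 3" for k
  proof -
    have "- (\<Sum>j<3. quat_rot (null_quat w u) j k * t j) = null_quat_x w u b k
        - \<mu> * (\<Sum>j<3. quat_rot (null_quat w u) j k * complex_of_real (comp3 u j))"
      by (simp add: null_quat_x_def t_def sum_lessThan_3 algebra_simps)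
    with quat_rot_null_quat_left[OF assms(1) that] show ?thesis by simp
  qed
  moreover have "(\<Sum>k<3. t k * t k) =
      complex_of_real (b \<bullet> b) + 2 * \<mu> * complex_of_real (u \<bullet> b) + \<mu> * \<mu> * complex_of_real (u \<bullet> u)"
    by (simp add: t_def inner_eq_sum_comp3 sum_lessThan_3 algebra_simps)
  ultimately show ?thesis
    unfolding z using assms(2) by (intro block_point_cong) simp_all
qed

lemma has_collinearity_bond_if_collinear_platform:
  assumes "u \<noteq> 0" and line: "\<forall>i<n. \<exists>c. p i = a + c *\<^sub>R u"
  shows "has_collinearity_bond n p P d"
proof -
  obtain b :: "real^3" where b: "b \<noteq> 0" "u \<bullet> b = 0"
    using orthogonal_to_vector_exists[of u] by (auto simp: orthogonal_def)
  have uu: "norm u * norm u = u \<bullet> u" by (metis dot_square_norm power2_eq_square)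
  define x where "x = null_quat_x (norm u) u b"
  define \<mu> where "\<mu> = csqrt ((2 * cinner a x - complex_of_real (b \<bullet> b)) / complex_of_real (u \<bullet> u))"
  define v where "v = block_point 0 (\<lambda>_ _. 0) x (\<lambda>_. 0) (2 * cinner a x)"
  have "complex_of_real (b \<bullet> b) + \<mu> * \<mu> * complex_of_real (u \<bullet> u) = 2 * cinner a x"
    using assms(1) unfolding \<mu>_def by (simp add: power2_csqrt[unfolded power2_eq_square])
  then have "v = quat_point (\<lambda>i. if i < 4 then null_quat (norm u) u i
      else complex_of_real (comp3 b (i - 4)) + \<mu> * complex_of_real (comp3 u (i - 4)))"
    unfolding v_def x_def by (simp add: quat_point_null_quat[OF uu b(2)])
  then have "v \<in> Xcone" by (simp add: quat_point_Xcone)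
  have h_v: "hC v = 0" and m_v: "\<forall>j<3. \<forall>k<3. mC v j k = 0" and y_v: "\<forall>k<3. yC v k = 0"
    and x_v: "\<And>k. k < 3 \<Longrightarrow> xC v k = x k" and r_v: "rC v = 2 * cinner a x"
    by (simp_all add: v_def block_point_coords)
  have "collinearity_point v"
    unfolding collinearity_point_iff
    using \<open>v \<in> Xcone\<close> h_v m_v y_v x_v null_quat_x_nonzero[OF uu assms(1) b] by (auto simp: x_def)
  moreover have "lform (p i) (P i) (d i) v = 0" if i: "i < n" for i
  proof -
    obtain c where "p i = a + c *\<^sub>R u" using line i by blast
    moreover have "cinner w (xC v) = cinner w x" for w
      by (simp add: cinner_def x_v)
    ultimately show ?thesis
      using cinner_null_quat_x[OF uu, of b]
      by (simp add: lform_collinearity_point[OF h_v m_v y_v] r_v cinner_add_scaleR x_def)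
  qed
  ultimately show ?thesis
    unfolding has_collinearity_bond_iff by blast
qed

lemma collinear_imp_line:
  fixes S :: "'a::euclidean_space set"
  assumes "collinear S"
  obtains a u where "u \<noteq> 0" and "\<forall>x\<in>S. \<exists>c. x = a + c *\<^sub>R u"
proof -
  obtain a w where w: "\<forall>x\<in>S. \<exists>c. x = a + c *\<^sub>R w"
    using assms unfolding collinear_alt by blast
  obtain e :: 'a where e: "e \<in> Basis" using nonempty_Basis by blast
  show thesis
  proof (cases "w = 0")
    case True
    with w e show thesis by (intro that[of e a]) (auto simp: nonzero_Basis)
  next
    case False
    from False w show thesis by (rule that)
  qed
qed

theorem mainTheorem7:
  fixes n :: nat and p P :: "nat \<Rightarrow> real^3" and d :: "nat \<Rightarrow> real"
  assumes "\<forall>i<n. d i \<ge> 0"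
  shows "has_collinearity_bond n p P d \<longleftrightarrow>
           (collinear (p ` {..<n}) \<or> collinear (P ` {..<n}))"
proof
  assume "has_collinearity_bond n p P d"
  then obtain v where v: "collinearity_point v" and l: "\<forall>i<n. lform (p i) (P i) (d i) v = 0"
    unfolding has_collinearity_bond_iff by blast
  show "collinear (p ` {..<n}) \<or> collinear (P ` {..<n})"
  proof (cases "\<forall>k<3. yC v k = 0")
    case True
    with v l show ?thesis using collinear_platform_if_bond by blast
  next
    case False
    with v have "\<forall>k<3. yC (swap_point v) k = 0"
      unfolding collinearity_point_iff by (simp add: swap_point_coords)
    moreover have "\<forall>i<n. lform (P i) (p i) (d i) (swap_point v) = 0"
      using l by (simp add: lform_swap_point)
    ultimately show ?thesis
      using collinear_platform_if_bond collinearity_point_swap_point[OF v] by blast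
  qed
next
  have bond: "has_collinearity_bond n q Q d" if "collinear (q ` {..<n})" for q Q
  proof -
    from that obtain a u where "u \<noteq> 0" "\<forall>x\<in>q ` {..<n}. \<exists>c. x = a + c *\<^sub>R u"
      by (rule collinear_imp_line)
    then show ?thesis by (intro has_collinearity_bond_if_collinear_platform) auto
  qed
  assume "collinear (p ` {..<n}) \<or> collinear (P ` {..<n})"
  then show "has_collinearity_bond n p P d"
    using bond has_collinearity_bond_swap by blast
qed

end
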